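(* The Hopf algebra $H_{\operatorname{NAP}}$ is a free commutative algebra on the elements $\mathsf{F}_{[t]}$ where $t$ runs over the unlabeled rooted trees whose root has exactly one child (root-valence $1$).
   Context: $\Pi_{\operatorname{NAP}}(I)$ is the set of forests of rooted trees with vertex set exactly $I$, ordered by: $y$ covers $x$ iff $y$ is obtained from $x$ by adding an edge from the root of one component of $x$ to the root of another component (the latter root remaining the root); $\widehat{0}$ is the forest of one-vertex trees. For a rooted tree $t$ on $I$, $[\widehat{0},t]$ is an interval in $\Pi_{\operatorname{NAP}}(I)$, whose isomorphism class depends only on the unlabeled tree underlying $t$. $H_{\operatorname{NAP}}$ is the incidence Hopf algebra (Schmitt's construction) of this family: it has a basis $\mathsf{F}_{[Q]}$ indexed by isomorphism classes of finite products $Q$ of posets $[\widehat{0},t]$ ($t$ rooted trees), product $\mathsf{F}_{[Q]}\mathsf{F}_{[Q']}=\mathsf{F}_{[Q\times Q']}$, unit the class of the one-element poset, coproduct $\Delta\mathsf{F}_{[Q]}=\sum_{x\in Q}\mathsf{F}_{[\widehat{0},x]}\otimes\mathsf{F}_{[x,\widehat{1}]}$. We write $\mathsf{F}_{[t]}=\mathsf{F}_{[[\widehat{0},t]]}$. *)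

theory Defs
  imports Main "HOL-Library.Multiset"
begin

type_synonym forest = "(nat \<times> nat) set"   (* edges (child, parent) *)
type_synonym pelt = "forest list"
type_synonym poset = "pelt set \<times> (pelt \<Rightarrow> pelt \<Rightarrow> bool)"
type_synonym pclass = "poset set"

definition is_forest :: "nat set \<Rightarrow> forest \<Rightarrow> bool" where
  "is_forest I E \<longleftrightarrow> finite I \<and> E \<subseteq> I \<times> I \<and>
     (\<forall>v w w'. (v,w) \<in> E \<and> (v,w') \<in> E \<longrightarrow> w = w') \<and> (\<forall>v. (v,v) \<notin> E\<^sup>+)"

definition roots :: "nat set \<Rightarrow> forest \<Rightarrow> nat set" where
  "roots I E = {v \<in> I. \<forall>w. (v,w) \<notin> E}"

definition nap_covers :: "nat set \<Rightarrow> forest \<Rightarrow> forest \<Rightarrow> bool" where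
  "nap_covers I x y \<longleftrightarrow> (\<exists>r1 r2. r1 \<in> roots I x \<and> r2 \<in> roots I x \<and> r1 \<noteq> r2 \<and>
       y = insert (r1, r2) x)"

definition nap_le :: "nat set \<Rightarrow> forest \<Rightarrow> forest \<Rightarrow> bool" where
  "nap_le I x y \<longleftrightarrow> is_forest I x \<and> is_forest I y \<and> (nap_covers I)\<^sup>*\<^sup>* x y"

definition is_tree :: "nat set \<Rightarrow> forest \<Rightarrow> bool" where
  "is_tree I t \<longleftrightarrow> is_forest I t \<and> card (roots I t) = 1"

definition root_valence_one :: "nat set \<Rightarrow> forest \<Rightarrow> bool" where
  "root_valence_one I t \<longleftrightarrow> (\<exists>r. roots I t = {r} \<and> card {v. (v, r) \<in> t} = 1)"

definition prodI :: "(nat set \<times> forest) list \<Rightarrow> poset" where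
  "prodI ts = ({xs. length xs = length ts \<and>
        (\<forall>i<length ts. nap_le (fst (ts!i)) {} (xs!i) \<and> nap_le (fst (ts!i)) (xs!i) (snd (ts!i)))},
     \<lambda>xs ys. \<forall>i<length ts. nap_le (fst (ts!i)) (xs!i) (ys!i))"

definition poset_iso :: "poset \<Rightarrow> poset \<Rightarrow> bool" where
  "poset_iso P Q \<longleftrightarrow> (\<exists>f. bij_betw f (fst P) (fst Q) \<and>
      (\<forall>x\<in>fst P. \<forall>y\<in>fst P. snd P x y \<longleftrightarrow> snd Q (f x) (f y)))"

definition cls :: "poset \<Rightarrow> pclass" where
  "cls P = {Q. poset_iso P Q}"

definition tree_list :: "(nat set \<times> forest) list \<Rightarrow> bool" where
  "tree_list ts \<longleftrightarrow> (\<forall>p\<in>set ts. is_tree (fst p) (snd p))"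

definition nap_basis :: "pclass set" where
  "nap_basis = {cls (prodI ts) | ts. tree_list ts}"

definition rep :: "pclass \<Rightarrow> (nat set \<times> forest) list" where
  "rep A = (SOME ts. tree_list ts \<and> A = cls (prodI ts))"

definition cls_prod :: "pclass \<Rightarrow> pclass \<Rightarrow> pclass" where
  "cls_prod A B = cls (prodI (rep A @ rep B))"

definition HNAP :: "(pclass \<Rightarrow> 'k::field) set" where
  "HNAP = {h. finite {C. h C \<noteq> 0} \<and> {C. h C \<noteq> 0} \<subseteq> nap_basis}"

definition basisF :: "pclass \<Rightarrow> (pclass \<Rightarrow> 'k::field)" where
  "basisF C = (\<lambda>D. if D = C then 1 else 0)"

definition nap_mult :: "(pclass \<Rightarrow> 'k::field) \<Rightarrow> (pclass \<Rightarrow> 'k) \<Rightarrow> (pclass \<Rightarrow> 'k)" where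
  "nap_mult a b = (\<lambda>C. \<Sum>(A,B)\<in>{(A,B). a A \<noteq> 0 \<and> b B \<noteq> 0 \<and> cls_prod A B = C}. a A * b B)"

definition nap_one :: "pclass \<Rightarrow> 'k::field" where
  "nap_one = basisF (cls (prodI []))"

definition nap_gens :: "(pclass \<Rightarrow> 'k::field) set" where
  "nap_gens = {basisF (cls (prodI [(I, t)])) | I t. is_tree I t \<and> root_valence_one I t}"

definition monomial_of :: "('a \<Rightarrow> 'a \<Rightarrow> 'a) \<Rightarrow> 'a \<Rightarrow> 'a multiset \<Rightarrow> 'a" where
  "monomial_of mul one M = foldr mul (SOME xs. mset xs = M) one"

definition free_comm_alg_on ::
  "('i \<Rightarrow> 'k::field) set \<Rightarrow> (('i \<Rightarrow> 'k) \<Rightarrow> ('i \<Rightarrow> 'k) \<Rightarrow> ('i \<Rightarrow> 'k)) \<Rightarrow> ('i \<Rightarrow> 'k)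
     \<Rightarrow> ('i \<Rightarrow> 'k) set \<Rightarrow> bool" where
  "free_comm_alg_on H mul one G \<longleftrightarrow>
     (\<forall>a\<in>H. \<forall>b\<in>H. mul a b = mul b a) \<and>
     (\<forall>M. set_mset M \<subseteq> G \<longrightarrow> monomial_of mul one M \<in> H) \<and>
     (\<forall>S c. finite S \<and> S \<subseteq> {M. set_mset M \<subseteq> G} \<and>
        (\<lambda>x. \<Sum>M\<in>S. c M * monomial_of mul one M x) = (\<lambda>_. 0) \<longrightarrow> (\<forall>M\<in>S. c M = 0)) \<and>
     (\<forall>h\<in>H. \<exists>S c. finite S \<and> S \<subseteq> {M. set_mset M \<subseteq> G} \<and>
        h = (\<lambda>x. \<Sum>M\<in>S. c M * monomial_of mul one M x))"

end

theory Submission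
  imports Defs
begin

text \<open>
  Unfolding the covering relation, \<open>x \<le> y\<close> in \<open>\<Pi>\<^sub>N\<^sub>A\<^sub>P(I)\<close> iff \<open>x \<subseteq> y\<close> and every vertex that
  already has a parent in \<open>x\<close> has all its children of \<open>y\<close> in \<open>x\<close>. Hence \<open>[0, t]\<close> consists of
  edge sets of \<open>t\<close> ordered by inclusion, and cutting \<open>t\<close> at its root splits \<open>[0, t]\<close> into the
  product of the intervals of its branches, which are trees of root-valence one. So every basis
  element is a product of generators.

  Conversely, the interval of a tree of root-valence one has a unique coatom (delete the root
  edge). In a product of such intervals the coatoms are in bijection with the factors, and each
  factor is recovered as the set of elements lying below no other coatom. An isomorphism of two
  such products therefore matches their factors up to permutation, so the monomials in the
  generators are in bijection with the basis. Commutativity comes from the symmetry of the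
  product of posets.
\<close>

section \<open>The order on rooted forests\<close>

definition child_closed :: "forest \<Rightarrow> forest \<Rightarrow> bool" where
  "child_closed x y \<longleftrightarrow> (\<forall>v p u. (v, p) \<in> x \<longrightarrow> (u, v) \<in> y \<longrightarrow> (u, v) \<in> x)"

lemma is_forest_subset: "is_forest I y \<Longrightarrow> x \<subseteq> y \<Longrightarrow> is_forest I x"
  unfolding is_forest_def using trancl_mono by blast

lemma finite_forest: "is_forest I y \<Longrightarrow> finite y"
  unfolding is_forest_def using finite_subset finite_cartesian_product by blast

lemma wf_converse_forest: "is_forest I y \<Longrightarrow> wf (y\<inverse>)"
  using finite_acyclic_wf_converse finite_forest unfolding is_forest_def acyclic_def by blast

lemma nap_covers_rtranclp_imp_child_closed:
  assumes "(nap_covers I)\<^sup>*\<^sup>* x y"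
  shows "x \<subseteq> y \<and> child_closed x y"
  using assms
proof (induction rule: rtranclp_induct)
  case base
  then show ?case by (simp add: child_closed_def)
next
  case (step z z')
  then obtain r1 r2 where r: "r1 \<in> roots I z" "r2 \<in> roots I z" "z' = insert (r1, r2) z"
    unfolding nap_covers_def by blast
  have "child_closed x z'"
    unfolding child_closed_def
  proof (intro allI impI)
    fix v p u assume a: "(v, p) \<in> x" "(u, v) \<in> z'"
    show "(u, v) \<in> x"
    proof (cases "(u, v) \<in> z")
      case True then show ?thesis using step.IH a unfolding child_closed_def by blast
    next
      case False
      then have "v = r2" using a r by auto
      then show ?thesis using a r step.IH unfolding roots_def by blast
    qed
  qed
  then show ?case using step r by auto
qed

text \<open>An edge of \<open>y - x\<close> whose child is minimal (no \<open>y - x\<close> edge below it) can be removed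
  last: its child is a root once the edge is gone, and child-closedness makes its parent a root of \<open>y\<close>.\<close>
lemma nap_covers_last_edge:
  assumes y: "is_forest I y" and "x \<subseteq> y" "child_closed x y" "x \<noteq> y"
  obtains y' where "is_forest I y'" "x \<subseteq> y'" "child_closed x y'" "card (y' - x) < card (y - x)"
    "nap_covers I y' y"
proof -
  define U where "U = {u. \<exists>w. (u, w) \<in> y - x}"
  obtain u0 where "u0 \<in> U" using assms(2,4) unfolding U_def by auto
  obtain u where uU: "u \<in> U" and umin: "\<And>z. (z, u) \<in> y\<inverse> \<Longrightarrow> z \<notin> U"
    using wfE_min[OF wf_converse_forest[OF y] \<open>u0 \<in> U\<close>] by blast
  obtain w where uw: "(u, w) \<in> y" "(u, w) \<notin> x" using uU U_def by blast
  have w_root: "\<forall>w'. (w, w') \<notin> y"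
  proof (intro allI notI)
    fix w' assume "(w, w') \<in> y"
    then have "(w, w') \<in> x" using umin[of w] uw(1) U_def by auto
    then show False using assms(3) uw unfolding child_closed_def by blast
  qed
  define y' where "y' = y - {(u, w)}"
  have uI: "u \<in> I" "w \<in> I" using y uw unfolding is_forest_def by auto
  show thesis
  proof
    show "is_forest I y'" using is_forest_subset[OF y] y'_def by blast
    show "x \<subseteq> y'" using assms(2) uw y'_def by blast
    show "child_closed x y'" using assms(3) unfolding child_closed_def y'_def by blast
    have "y' - x = (y - x) - {(u, w)}" using y'_def by blast
    then show "card (y' - x) < card (y - x)"
      using uw finite_forest[OF y] by (metis DiffI card_Diff1_less finite_Diff)
    show "nap_covers I y' y"
      unfolding nap_covers_def
    proof (intro exI conjI)
      show "u \<in> roots I y'" using uI y uw unfolding roots_def y'_def is_forest_def by blast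
      show "w \<in> roots I y'" using uI w_root unfolding roots_def y'_def by blast
      show "u \<noteq> w" using y uw unfolding is_forest_def by blast
      show "y = insert (u, w) y'" using uw y'_def by blast
    qed
  qed
qed

lemma child_closed_imp_nap_covers_rtranclp:
  assumes "is_forest I y" "x \<subseteq> y" "child_closed x y"
  shows "(nap_covers I)\<^sup>*\<^sup>* x y"
  using assms
proof (induction "card (y - x)" arbitrary: y rule: less_induct)
  case less
  show ?case
  proof (cases "x = y")
    case False
    with less.prems obtain y' where "is_forest I y'" "x \<subseteq> y'" "child_closed x y'"
      "card (y' - x) < card (y - x)" "nap_covers I y' y"
      by (rule nap_covers_last_edge)
    with less.hyps show ?thesis by (meson rtranclp.rtrancl_into_rtrancl)
  qed simp
qed

text \<open>Only roots ever acquire children, so a vertex that already has a parent in \<open>x\<close>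
  has all of its children in every \<open>y \<ge> x\<close>.\<close>
lemma nap_le_iff:
  assumes "is_forest I y"
  shows "nap_le I x y \<longleftrightarrow> x \<subseteq> y \<and> child_closed x y"
proof
  assume "nap_le I x y"
  then show "x \<subseteq> y \<and> child_closed x y"
    unfolding nap_le_def by (blast dest: nap_covers_rtranclp_imp_child_closed)
next
  assume "x \<subseteq> y \<and> child_closed x y"
  then show "nap_le I x y"
    unfolding nap_le_def using assms is_forest_subset child_closed_imp_nap_covers_rtranclp by blast
qed

section \<open>Intervals and their products\<close>

definition lower_forests :: "forest \<Rightarrow> forest set" where
  "lower_forests t = {x. x \<subseteq> t \<and> child_closed x t}"

text \<open>The product of the intervals \<open>[0, t\<^sub>i]\<close>, in the shape given to it by \<open>nap_le_iff\<close>.\<close>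
definition prod_poset :: "forest list \<Rightarrow> poset" where
  "prod_poset ts = ({xs. list_all2 (\<lambda>x t. x \<in> lower_forests t) xs ts}, list_all2 (\<subseteq>))"

lemma lower_forests_subset: "x \<in> lower_forests t \<Longrightarrow> x \<subseteq> t"
  unfolding lower_forests_def by blast

lemma self_in_lower_forests: "t \<in> lower_forests t"
  unfolding lower_forests_def child_closed_def by blast

lemma interval_eq_lower_forests:
  assumes "is_forest I t"
  shows "nap_le I {} x \<and> nap_le I x t \<longleftrightarrow> x \<in> lower_forests t"
proof
  assume "nap_le I {} x \<and> nap_le I x t"
  then show "x \<in> lower_forests t" using nap_le_iff[OF assms] unfolding lower_forests_def by blast
next
  assume x: "x \<in> lower_forests t"
  then have "is_forest I x" using is_forest_subset[OF assms] unfolding lower_forests_def by blast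
  then have "nap_le I {} x" using nap_le_iff by (simp add: child_closed_def)
  then show "nap_le I {} x \<and> nap_le I x t" using nap_le_iff[OF assms] x unfolding lower_forests_def by blast
qed

lemma nap_le_lower_forests_iff:
  assumes "is_forest I t" "x \<in> lower_forests t" "y \<in> lower_forests t"
  shows "nap_le I x y \<longleftrightarrow> x \<subseteq> y"
proof -
  have "is_forest I y" using is_forest_subset[OF assms(1)] assms(3) unfolding lower_forests_def by blast
  moreover have "child_closed x y" using assms(2,3) unfolding lower_forests_def child_closed_def by blast
  ultimately show ?thesis using nap_le_iff by blast
qed

lemma prod_poset_mem_iff:
  "xs \<in> fst (prod_poset ts) \<longleftrightarrow> length xs = length ts \<and> (\<forall>i<length ts. xs ! i \<in> lower_forests (ts ! i))"
  unfolding prod_poset_def by (auto simp: list_all2_conv_all_nth)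

lemma prod_poset_length: "xs \<in> fst (prod_poset ts) \<Longrightarrow> length xs = length ts"
  unfolding prod_poset_def by (simp add: list_all2_lengthD)

lemma prod_poset_le_iff:
  "xs \<in> fst (prod_poset ts) \<Longrightarrow> ys \<in> fst (prod_poset ts) \<Longrightarrow>
     snd (prod_poset ts) xs ys \<longleftrightarrow> (\<forall>i<length ts. xs ! i \<subseteq> ys ! i)"
  unfolding prod_poset_def by (simp add: list_all2_conv_all_nth)

lemma poset_iso_intro:
  assumes "\<And>x. x \<in> fst P \<Longrightarrow> f x \<in> fst Q" "\<And>y. y \<in> fst Q \<Longrightarrow> g y \<in> fst P"
    "\<And>x. x \<in> fst P \<Longrightarrow> g (f x) = x" "\<And>y. y \<in> fst Q \<Longrightarrow> f (g y) = y"
    "\<And>x y. x \<in> fst P \<Longrightarrow> y \<in> fst P \<Longrightarrow> snd P x y \<longleftrightarrow> snd Q (f x) (f y)"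
  shows "poset_iso P Q"
  unfolding poset_iso_def
proof (intro exI conjI)
  show "bij_betw f (fst P) (fst Q)" by (rule bij_betw_byWitness[where f'=g]) (use assms in auto)
qed (use assms in auto)

lemma poset_iso_refl: "poset_iso P P"
  by (rule poset_iso_intro[where f=id and g=id]) auto

lemma poset_isoE:
  assumes "poset_iso P Q"
  obtains f g where "\<And>x. x \<in> fst P \<Longrightarrow> f x \<in> fst Q" "\<And>y. y \<in> fst Q \<Longrightarrow> g y \<in> fst P"
    "\<And>x. x \<in> fst P \<Longrightarrow> g (f x) = x" "\<And>y. y \<in> fst Q \<Longrightarrow> f (g y) = y"
    "\<And>x y. x \<in> fst P \<Longrightarrow> y \<in> fst P \<Longrightarrow> snd P x y \<longleftrightarrow> snd Q (f x) (f y)"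
proof -
  obtain f where f: "bij_betw f (fst P) (fst Q)"
    "\<forall>x\<in>fst P. \<forall>y\<in>fst P. snd P x y \<longleftrightarrow> snd Q (f x) (f y)"
    using assms unfolding poset_iso_def by blast
  show thesis
    by (rule that[of f "inv_into (fst P) f"])
      (use f in \<open>auto simp: bij_betw_def inv_into_into f_inv_into_f\<close>)
qed

lemma poset_iso_sym:
  assumes "poset_iso P Q"
  shows "poset_iso Q P"
proof -
  obtain f g where fg: "\<And>x. x \<in> fst P \<Longrightarrow> f x \<in> fst Q" "\<And>y. y \<in> fst Q \<Longrightarrow> g y \<in> fst P"
    "\<And>x. x \<in> fst P \<Longrightarrow> g (f x) = x" "\<And>y. y \<in> fst Q \<Longrightarrow> f (g y) = y"
    "\<And>x y. x \<in> fst P \<Longrightarrow> y \<in> fst P \<Longrightarrow> snd P x y \<longleftrightarrow> snd Q (f x) (f y)"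
    by (rule poset_isoE[OF assms]) blast
  show ?thesis
    by (rule poset_iso_intro[where f=g and g=f]) (use fg in auto)
qed

lemma poset_iso_trans [trans]:
  assumes "poset_iso P Q" "poset_iso Q R"
  shows "poset_iso P R"
proof -
  obtain f f' where f: "\<And>x. x \<in> fst P \<Longrightarrow> f x \<in> fst Q" "\<And>y. y \<in> fst Q \<Longrightarrow> f' y \<in> fst P"
    "\<And>x. x \<in> fst P \<Longrightarrow> f' (f x) = x" "\<And>y. y \<in> fst Q \<Longrightarrow> f (f' y) = y"
    "\<And>x y. x \<in> fst P \<Longrightarrow> y \<in> fst P \<Longrightarrow> snd P x y \<longleftrightarrow> snd Q (f x) (f y)"
    by (rule poset_isoE[OF assms(1)]) blast
  obtain g g' where g: "\<And>x. x \<in> fst Q \<Longrightarrow> g x \<in> fst R" "\<And>y. y \<in> fst R \<Longrightarrow> g' y \<in> fst Q"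
    "\<And>x. x \<in> fst Q \<Longrightarrow> g' (g x) = x" "\<And>y. y \<in> fst R \<Longrightarrow> g (g' y) = y"
    "\<And>x y. x \<in> fst Q \<Longrightarrow> y \<in> fst Q \<Longrightarrow> snd Q x y \<longleftrightarrow> snd R (g x) (g y)"
    by (rule poset_isoE[OF assms(2)]) blast
  show ?thesis
    by (rule poset_iso_intro[where f="g \<circ> f" and g="f' \<circ> g'"]) (use f g in auto)
qed

lemma cls_eq_iff: "cls P = cls Q \<longleftrightarrow> poset_iso P Q"
  unfolding cls_def using poset_iso_refl poset_iso_sym poset_iso_trans by blast

lemma prodI_iso_prod_poset:
  assumes "tree_list ts"
  shows "poset_iso (prodI ts) (prod_poset (map snd ts))"
proof -
  have F: "\<And>i. i < length ts \<Longrightarrow> is_forest (fst (ts ! i)) (snd (ts ! i))"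
    using assms unfolding tree_list_def is_tree_def by auto
  have C: "fst (prodI ts) = fst (prod_poset (map snd ts))"
  proof (rule set_eqI)
    fix xs
    show "xs \<in> fst (prodI ts) \<longleftrightarrow> xs \<in> fst (prod_poset (map snd ts))"
      unfolding prod_poset_mem_iff prodI_def using interval_eq_lower_forests[OF F] by auto
  qed
  show ?thesis
  proof (rule poset_iso_intro[where f=id and g=id])
    fix x y assume xy: "x \<in> fst (prodI ts)" "y \<in> fst (prodI ts)"
    then have "\<And>i. i < length ts \<Longrightarrow> x ! i \<in> lower_forests (snd (ts ! i)) \<and> y ! i \<in> lower_forests (snd (ts ! i))"
      using C by (auto simp: prod_poset_mem_iff)
    then have "(\<forall>i<length ts. nap_le (fst (ts ! i)) (x ! i) (y ! i)) \<longleftrightarrow> (\<forall>i<length ts. x ! i \<subseteq> y ! i)"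
      using nap_le_lower_forests_iff[OF F] by blast
    then show "snd (prodI ts) x y = snd (prod_poset (map snd ts)) (id x) (id y)"
      unfolding prodI_def using prod_poset_le_iff xy C by simp
  qed (use C in auto)
qed

lemma prod_poset_append_mem_iff:
  "length a = length ts \<Longrightarrow>
     a @ b \<in> fst (prod_poset (ts @ ss)) \<longleftrightarrow> a \<in> fst (prod_poset ts) \<and> b \<in> fst (prod_poset ss)"
  unfolding prod_poset_def by (simp add: list_all2_append)

lemma prod_poset_append_le_iff:
  "length a = length a' \<Longrightarrow>
     snd (prod_poset (ts @ ss)) (a @ b) (a' @ b') \<longleftrightarrow> snd (prod_poset ts) a a' \<and> snd (prod_poset ss) b b'"
  unfolding prod_poset_def by (simp add: list_all2_append)

lemma prod_poset_append_memE:
  assumes "xs \<in> fst (prod_poset (ts @ ss))"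
  obtains a b where "xs = a @ b" "a \<in> fst (prod_poset ts)" "b \<in> fst (prod_poset ss)"
  using assms unfolding prod_poset_def by (auto simp: list_all2_append2)

lemma poset_iso_prod_poset_append:
  assumes "poset_iso (prod_poset ts) (prod_poset ts')" "poset_iso (prod_poset ss) (prod_poset ss')"
  shows "poset_iso (prod_poset (ts @ ss)) (prod_poset (ts' @ ss'))"
proof -
  obtain f f' where f: "\<And>x. x \<in> fst (prod_poset ts) \<Longrightarrow> f x \<in> fst (prod_poset ts')"
    "\<And>y. y \<in> fst (prod_poset ts') \<Longrightarrow> f' y \<in> fst (prod_poset ts)"
    "\<And>x. x \<in> fst (prod_poset ts) \<Longrightarrow> f' (f x) = x" "\<And>y. y \<in> fst (prod_poset ts') \<Longrightarrow> f (f' y) = y"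
    "\<And>x y. x \<in> fst (prod_poset ts) \<Longrightarrow> y \<in> fst (prod_poset ts) \<Longrightarrow>
       snd (prod_poset ts) x y \<longleftrightarrow> snd (prod_poset ts') (f x) (f y)"
    by (rule poset_isoE[OF assms(1)]) blast
  obtain g g' where g: "\<And>x. x \<in> fst (prod_poset ss) \<Longrightarrow> g x \<in> fst (prod_poset ss')"
    "\<And>y. y \<in> fst (prod_poset ss') \<Longrightarrow> g' y \<in> fst (prod_poset ss)"
    "\<And>x. x \<in> fst (prod_poset ss) \<Longrightarrow> g' (g x) = x" "\<And>y. y \<in> fst (prod_poset ss') \<Longrightarrow> g (g' y) = y"
    "\<And>x y. x \<in> fst (prod_poset ss) \<Longrightarrow> y \<in> fst (prod_poset ss) \<Longrightarrow>
       snd (prod_poset ss) x y \<longleftrightarrow> snd (prod_poset ss') (g x) (g y)"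
    by (rule poset_isoE[OF assms(2)]) blast
  have len: "\<And>x. x \<in> fst (prod_poset ts) \<Longrightarrow> length (f x) = length ts'"
    "\<And>y. y \<in> fst (prod_poset ts') \<Longrightarrow> length (f' y) = length ts"
    using f(1,2) prod_poset_length by blast+
  show ?thesis
  proof (rule poset_iso_intro[where f="\<lambda>xs. f (take (length ts) xs) @ g (drop (length ts) xs)"
        and g="\<lambda>xs. f' (take (length ts') xs) @ g' (drop (length ts') xs)"])
    fix xs assume "xs \<in> fst (prod_poset (ts @ ss))"
    then obtain a b where "xs = a @ b" "a \<in> fst (prod_poset ts)" "b \<in> fst (prod_poset ss)"
      by (rule prod_poset_append_memE)
    then show "f (take (length ts) xs) @ g (drop (length ts) xs) \<in> fst (prod_poset (ts' @ ss'))"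
      "f' (take (length ts') (f (take (length ts) xs) @ g (drop (length ts) xs))) @
         g' (drop (length ts') (f (take (length ts) xs) @ g (drop (length ts) xs))) = xs"
      using f g len[of a] prod_poset_length[of a] by (auto simp: prod_poset_append_mem_iff)
  next
    fix xs assume "xs \<in> fst (prod_poset (ts' @ ss'))"
    then obtain a b where "xs = a @ b" "a \<in> fst (prod_poset ts')" "b \<in> fst (prod_poset ss')"
      by (rule prod_poset_append_memE)
    then show "f' (take (length ts') xs) @ g' (drop (length ts') xs) \<in> fst (prod_poset (ts @ ss))"
      "f (take (length ts) (f' (take (length ts') xs) @ g' (drop (length ts') xs))) @
         g (drop (length ts) (f' (take (length ts') xs) @ g' (drop (length ts') xs))) = xs"
      using f g len(2)[of a] prod_poset_length[of a] by (auto simp: prod_poset_append_mem_iff)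
  next
    fix xs ys assume "xs \<in> fst (prod_poset (ts @ ss))" "ys \<in> fst (prod_poset (ts @ ss))"
    then obtain a b c d where "xs = a @ b" "a \<in> fst (prod_poset ts)" "b \<in> fst (prod_poset ss)"
      "ys = c @ d" "c \<in> fst (prod_poset ts)" "d \<in> fst (prod_poset ss)"
      by (metis prod_poset_append_memE)
    then show "snd (prod_poset (ts @ ss)) xs ys \<longleftrightarrow> snd (prod_poset (ts' @ ss'))
        (f (take (length ts) xs) @ g (drop (length ts) xs)) (f (take (length ts) ys) @ g (drop (length ts) ys))"
      using f g len(1)[of a] len(1)[of c] prod_poset_length[of a] prod_poset_length[of c]
      by (simp add: prod_poset_append_le_iff)
  qed
qed

lemma poset_iso_prod_poset_swap: "poset_iso (prod_poset (ts @ ss)) (prod_poset (ss @ ts))"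
proof (rule poset_iso_intro[where f="\<lambda>xs. drop (length ts) xs @ take (length ts) xs"
      and g="\<lambda>xs. drop (length ss) xs @ take (length ss) xs"])
  fix xs assume "xs \<in> fst (prod_poset (ts @ ss))"
  then obtain a b where "xs = a @ b" "a \<in> fst (prod_poset ts)" "b \<in> fst (prod_poset ss)"
    by (rule prod_poset_append_memE)
  then show "drop (length ts) xs @ take (length ts) xs \<in> fst (prod_poset (ss @ ts))"
    "drop (length ss) (drop (length ts) xs @ take (length ts) xs) @
       take (length ss) (drop (length ts) xs @ take (length ts) xs) = xs"
    using prod_poset_length by (auto simp: prod_poset_append_mem_iff)
next
  fix xs assume "xs \<in> fst (prod_poset (ss @ ts))"
  then obtain a b where "xs = a @ b" "a \<in> fst (prod_poset ss)" "b \<in> fst (prod_poset ts)"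
    by (rule prod_poset_append_memE)
  then show "drop (length ss) xs @ take (length ss) xs \<in> fst (prod_poset (ts @ ss))"
    "drop (length ts) (drop (length ss) xs @ take (length ss) xs) @
       take (length ts) (drop (length ss) xs @ take (length ss) xs) = xs"
    using prod_poset_length by (auto simp: prod_poset_append_mem_iff)
next
  fix xs ys assume "xs \<in> fst (prod_poset (ts @ ss))" "ys \<in> fst (prod_poset (ts @ ss))"
  then obtain a b c d where "xs = a @ b" "a \<in> fst (prod_poset ts)" "b \<in> fst (prod_poset ss)"
    "ys = c @ d" "c \<in> fst (prod_poset ts)" "d \<in> fst (prod_poset ss)"
    by (metis prod_poset_append_memE)
  then show "snd (prod_poset (ts @ ss)) xs ys \<longleftrightarrow> snd (prod_poset (ss @ ts))
      (drop (length ts) xs @ take (length ts) xs) (drop (length ts) ys @ take (length ts) ys)"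
    using prod_poset_length by (auto simp: prod_poset_append_le_iff)
qed

section \<open>Unique factorization of products of intervals with a unique coatom\<close>

definition is_poset_iso :: "(pelt \<Rightarrow> pelt) \<Rightarrow> poset \<Rightarrow> poset \<Rightarrow> bool" where
  "is_poset_iso f P Q \<longleftrightarrow> bij_betw f (fst P) (fst Q) \<and>
     (\<forall>x\<in>fst P. \<forall>y\<in>fst P. snd P x y \<longleftrightarrow> snd Q (f x) (f y))"

lemma poset_iso_iff_ex_is_poset_iso: "poset_iso P Q \<longleftrightarrow> (\<exists>f. is_poset_iso f P Q)"
  unfolding poset_iso_def is_poset_iso_def ..

definition is_coatom :: "poset \<Rightarrow> pelt \<Rightarrow> pelt \<Rightarrow> bool" where
  "is_coatom P T A \<longleftrightarrow> A \<in> fst P \<and> A \<noteq> T \<and> (\<forall>y\<in>fst P. snd P A y \<longrightarrow> y = A \<or> y = T)"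

text \<open>In a product of posets with top elements and unique coatoms, the slice of the \<open>i\<close>-th
  coatom (relative to the top \<open>T\<close>) is a copy of the \<open>i\<close>-th factor.\<close>
definition coatom_slice :: "poset \<Rightarrow> pelt \<Rightarrow> pelt \<Rightarrow> pelt set" where
  "coatom_slice P T A = {y\<in>fst P. \<forall>B. is_coatom P T B \<and> B \<noteq> A \<longrightarrow> \<not> snd P y B}"

lemma is_poset_iso_top:
  assumes f: "is_poset_iso f P Q"
    and T: "T \<in> fst P" "\<forall>y\<in>fst P. snd P y T"
    and T': "T' \<in> fst Q" "\<forall>y\<in>fst Q. snd Q y T'"
    and antisym: "\<forall>x\<in>fst Q. \<forall>y\<in>fst Q. snd Q x y \<longrightarrow> snd Q y x \<longrightarrow> x = y"
  shows "f T = T'"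
proof -
  have fT: "f T \<in> fst Q" using f T unfolding is_poset_iso_def by (auto simp: bij_betw_def)
  obtain x where x: "x \<in> fst P" "T' = f x"
    using T' f unfolding is_poset_iso_def by (metis bij_betw_imp_surj_on imageE)
  then have "snd Q T' (f T)" using T f unfolding is_poset_iso_def by blast
  moreover have "snd Q (f T) T'" using T' fT by auto
  ultimately show ?thesis using antisym fT T' by blast
qed

lemma is_poset_iso_coatom_iff:
  assumes f: "is_poset_iso f P Q" and T: "T \<in> fst P" and A: "A \<in> fst P"
  shows "is_coatom P T A \<longleftrightarrow> is_coatom Q (f T) (f A)"
proof -
  have inj: "\<And>x y. x \<in> fst P \<Longrightarrow> y \<in> fst P \<Longrightarrow> f x = f y \<longleftrightarrow> x = y"
    and im: "fst Q = f ` fst P"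
    and le: "\<forall>x\<in>fst P. \<forall>y\<in>fst P. snd P x y \<longleftrightarrow> snd Q (f x) (f y)"
    using f unfolding is_poset_iso_def bij_betw_def inj_on_def by blast+
  have "(\<forall>y\<in>fst P. snd P A y \<longrightarrow> y = A \<or> y = T) \<longleftrightarrow>
        (\<forall>y\<in>f ` fst P. snd Q (f A) y \<longrightarrow> y = f A \<or> y = f T)"
    using inj le A T by auto
  then show ?thesis unfolding is_coatom_def using A T inj im by auto
qed

lemma is_poset_iso_image_coatom_slice:
  assumes f: "is_poset_iso f P Q" and T: "T \<in> fst P" and A: "A \<in> fst P"
  shows "f ` coatom_slice P T A = coatom_slice Q (f T) (f A)"
proof -
  have inj: "\<And>x y. x \<in> fst P \<Longrightarrow> y \<in> fst P \<Longrightarrow> f x = f y \<longleftrightarrow> x = y"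
    and im: "fst Q = f ` fst P"
    and le: "\<And>x y. x \<in> fst P \<Longrightarrow> y \<in> fst P \<Longrightarrow> snd P x y \<longleftrightarrow> snd Q (f x) (f y)"
    using f unfolding is_poset_iso_def bij_betw_def inj_on_def by blast+
  have coatom_image: "\<exists>B\<in>fst P. B' = f B \<and> is_coatom P T B" if B': "is_coatom Q (f T) B'" for B'
  proof -
    obtain B where B: "B \<in> fst P" "B' = f B" using B' im unfolding is_coatom_def by auto
    then show ?thesis using B' is_poset_iso_coatom_iff[OF f T B(1)] by auto
  qed
  have mem_iff: "y \<in> coatom_slice P T A \<longleftrightarrow> f y \<in> coatom_slice Q (f T) (f A)" if y: "y \<in> fst P" for y
  proof
    assume y_slice: "y \<in> coatom_slice P T A"
    show "f y \<in> coatom_slice Q (f T) (f A)"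
      unfolding coatom_slice_def
    proof (intro CollectI conjI allI impI)
      show "f y \<in> fst Q" using y im by simp
      fix B' assume B': "is_coatom Q (f T) B' \<and> B' \<noteq> f A"
      then obtain B where B: "B \<in> fst P" "B' = f B" "is_coatom P T B" using coatom_image by blast
      then have "\<not> snd P y B" using y_slice B' unfolding coatom_slice_def by blast
      then show "\<not> snd Q (f y) B'" using le y B by blast
    qed
  next
    assume fy_slice: "f y \<in> coatom_slice Q (f T) (f A)"
    show "y \<in> coatom_slice P T A"
      unfolding coatom_slice_def
    proof (intro CollectI conjI allI impI y)
      fix B assume B: "is_coatom P T B \<and> B \<noteq> A"
      then have B_in: "B \<in> fst P" unfolding is_coatom_def by blast
      have "is_coatom Q (f T) (f B)" using is_poset_iso_coatom_iff[OF f T B_in] B by blast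
      moreover have "f B \<noteq> f A" using inj[OF B_in A] B by blast
      ultimately have "\<not> snd Q (f y) (f B)" using fy_slice unfolding coatom_slice_def by blast
      then show "\<not> snd P y B" using le[OF y B_in] by blast
    qed
  qed
  have "coatom_slice P T A \<subseteq> fst P" "coatom_slice Q (f T) (f A) \<subseteq> f ` fst P"
    unfolding coatom_slice_def using im by auto
  with mem_iff show ?thesis by blast
qed

lemma poset_iso_coatom_slice:
  assumes f: "is_poset_iso f P Q" and T: "T \<in> fst P" and A: "A \<in> fst P"
  shows "poset_iso (coatom_slice P T A, snd P) (coatom_slice Q (f T) (f A), snd Q)"
proof -
  have sub: "coatom_slice P T A \<subseteq> fst P" unfolding coatom_slice_def by auto
  have "bij_betw f (fst P) (fst Q)" using f unfolding is_poset_iso_def by blast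
  then have "bij_betw f (coatom_slice P T A) (coatom_slice Q (f T) (f A))"
    using bij_betw_subset[OF _ sub] is_poset_iso_image_coatom_slice[OF f T A] by metis
  moreover have "\<forall>x\<in>coatom_slice P T A. \<forall>y\<in>coatom_slice P T A. snd P x y \<longleftrightarrow> snd Q (f x) (f y)"
    using f sub unfolding is_poset_iso_def by blast
  ultimately show ?thesis unfolding poset_iso_def by auto
qed

lemma prod_poset_top_mem: "ts \<in> fst (prod_poset ts)"
  unfolding prod_poset_mem_iff using self_in_lower_forests by simp

lemma prod_poset_le_top: "y \<in> fst (prod_poset ts) \<Longrightarrow> snd (prod_poset ts) y ts"
  using prod_poset_le_iff[OF _ prod_poset_top_mem] lower_forests_subset
  unfolding prod_poset_mem_iff by blast

lemma prod_poset_antisym: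
  "x \<in> fst (prod_poset ts) \<Longrightarrow> y \<in> fst (prod_poset ts) \<Longrightarrow>
     snd (prod_poset ts) x y \<Longrightarrow> snd (prod_poset ts) y x \<Longrightarrow> x = y"
  using prod_poset_le_iff unfolding prod_poset_mem_iff by (metis nth_equalityI subset_antisym)

definition has_unique_coatom :: "forest \<Rightarrow> bool" where
  "has_unique_coatom t \<longleftrightarrow> (\<exists>a\<in>lower_forests t. a \<noteq> t \<and> (\<forall>x\<in>lower_forests t. x \<noteq> t \<longrightarrow> x \<subseteq> a))"

definition coatom_of :: "forest \<Rightarrow> forest" where
  "coatom_of t = (SOME a. a \<in> lower_forests t \<and> a \<noteq> t \<and> (\<forall>x\<in>lower_forests t. x \<noteq> t \<longrightarrow> x \<subseteq> a))"

lemma coatom_of: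
  assumes "has_unique_coatom t"
  shows coatom_of_mem: "coatom_of t \<in> lower_forests t"
    and coatom_of_neq: "coatom_of t \<noteq> t"
    and le_coatom_of: "\<And>x. x \<in> lower_forests t \<Longrightarrow> x \<noteq> t \<Longrightarrow> x \<subseteq> coatom_of t"
proof -
  have "coatom_of t \<in> lower_forests t \<and> coatom_of t \<noteq> t \<and>
    (\<forall>x\<in>lower_forests t. x \<noteq> t \<longrightarrow> x \<subseteq> coatom_of t)"
    using assms unfolding has_unique_coatom_def coatom_of_def by (rule someI2_bex) blast
  then show "coatom_of t \<in> lower_forests t" "coatom_of t \<noteq> t"
    "\<And>x. x \<in> lower_forests t \<Longrightarrow> x \<noteq> t \<Longrightarrow> x \<subseteq> coatom_of t"
    by auto
qed

lemma le_coatom_of_iff: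
  assumes "has_unique_coatom t" "x \<in> lower_forests t"
  shows "x \<subseteq> coatom_of t \<longleftrightarrow> x \<noteq> t"
  using coatom_of[OF assms(1)] assms(2) lower_forests_subset by blast

definition coatom_at :: "forest list \<Rightarrow> nat \<Rightarrow> forest list" where
  "coatom_at ts i = ts[i := coatom_of (ts ! i)]"

locale unique_coatom_factors =
  fixes ts :: "forest list"
  assumes unique_coatom: "\<And>i. i < length ts \<Longrightarrow> has_unique_coatom (ts ! i)"
begin

lemma coatom_at_mem: "i < length ts \<Longrightarrow> coatom_at ts i \<in> fst (prod_poset ts)"
  unfolding prod_poset_mem_iff coatom_at_def
  using coatom_of_mem[OF unique_coatom] self_in_lower_forests by (simp add: nth_list_update)

lemma coatom_at_nth:
  "i < length ts \<Longrightarrow> j < length ts \<Longrightarrow> coatom_at ts i ! j = (if j = i then coatom_of (ts ! i) else ts ! j)"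
  unfolding coatom_at_def by simp

lemma coatom_at_neq_top: "i < length ts \<Longrightarrow> coatom_at ts i \<noteq> ts"
  using coatom_at_nth[of i i] coatom_of_neq[OF unique_coatom] by force

lemma coatom_at_inj: "i < length ts \<Longrightarrow> j < length ts \<Longrightarrow> coatom_at ts i = coatom_at ts j \<Longrightarrow> i = j"
  using coatom_at_nth[of i i] coatom_at_nth[of j i] coatom_of_neq[OF unique_coatom] by force

lemma le_coatom_at_iff:
  assumes y: "y \<in> fst (prod_poset ts)" and j: "j < length ts"
  shows "snd (prod_poset ts) y (coatom_at ts j) \<longleftrightarrow> y ! j \<noteq> ts ! j"
proof -
  have yD: "\<And>k. k < length ts \<Longrightarrow> y ! k \<in> lower_forests (ts ! k)" using y prod_poset_mem_iff by blast
  have "snd (prod_poset ts) y (coatom_at ts j) \<longleftrightarrow> (\<forall>k<length ts. y ! k \<subseteq> coatom_at ts j ! k)"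
    using prod_poset_le_iff[OF y coatom_at_mem[OF j]] .
  also have "\<dots> \<longleftrightarrow> y ! j \<subseteq> coatom_of (ts ! j)"
    using coatom_at_nth[OF j] yD lower_forests_subset j by auto
  also have "\<dots> \<longleftrightarrow> y ! j \<noteq> ts ! j"
    using le_coatom_of_iff[OF unique_coatom[OF j] yD[OF j]] .
  finally show ?thesis .
qed

lemma is_coatom_iff: "is_coatom (prod_poset ts) ts B \<longleftrightarrow> (\<exists>i<length ts. B = coatom_at ts i)"
proof
  assume c: "is_coatom (prod_poset ts) ts B"
  then have B: "B \<in> fst (prod_poset ts)" "B \<noteq> ts" unfolding is_coatom_def by auto
  then obtain i where i: "i < length ts" "B ! i \<noteq> ts ! i"
    using prod_poset_length nth_equalityI by metis
  then have "snd (prod_poset ts) B (coatom_at ts i)" using le_coatom_at_iff B(1) by blast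
  then have "coatom_at ts i = B \<or> coatom_at ts i = ts"
    using c coatom_at_mem[OF i(1)] unfolding is_coatom_def by blast
  then show "\<exists>i<length ts. B = coatom_at ts i" using coatom_at_neq_top i(1) by auto
next
  assume "\<exists>i<length ts. B = coatom_at ts i"
  then obtain i where i: "i < length ts" and B: "B = coatom_at ts i" by blast
  have "y = B \<or> y = ts" if y: "y \<in> fst (prod_poset ts)" "snd (prod_poset ts) B y" for y
  proof -
    have ly: "length y = length ts" using y prod_poset_length by blast
    have yD: "\<And>j. j < length ts \<Longrightarrow> y ! j \<in> lower_forests (ts ! j)" using y prod_poset_mem_iff by blast
    have above: "\<And>j. j < length ts \<Longrightarrow> coatom_at ts i ! j \<subseteq> y ! j"
      using y prod_poset_le_iff coatom_at_mem[OF i] B by blast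
    have other: "\<And>j. j < length ts \<Longrightarrow> j \<noteq> i \<Longrightarrow> y ! j = ts ! j"
      using above coatom_at_nth[OF i] yD lower_forests_subset by (metis subset_antisym)
    show ?thesis
    proof (cases "y ! i = ts ! i")
      case True
      then have "y = ts" using other ly by (metis nth_equalityI)
      then show ?thesis by simp
    next
      case False
      then have "y ! i \<subseteq> coatom_of (ts ! i)" using le_coatom_of_iff[OF unique_coatom[OF i] yD[OF i]] by blast
      then have "y ! i = coatom_of (ts ! i)" using above[OF i] coatom_at_nth[OF i i] by auto
      then have "y = coatom_at ts i"
        using other ly coatom_at_nth[OF i] by (intro nth_equalityI) (auto simp: coatom_at_def)
      then show ?thesis using B by simp
    qed
  qed
  then show "is_coatom (prod_poset ts) ts B"
    unfolding is_coatom_def using coatom_at_mem[OF i] coatom_at_neq_top[OF i] B by auto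
qed

lemma coatom_slice_eq:
  assumes i: "i < length ts"
  shows "coatom_slice (prod_poset ts) ts (coatom_at ts i) = {ts[i := x] | x. x \<in> lower_forests (ts ! i)}"
proof (intro set_eqI iffI)
  fix y assume y_slice: "y \<in> coatom_slice (prod_poset ts) ts (coatom_at ts i)"
  then have y: "y \<in> fst (prod_poset ts)" unfolding coatom_slice_def by blast
  have "y ! j = ts ! j" if j: "j < length ts" "j \<noteq> i" for j
  proof -
    have "is_coatom (prod_poset ts) ts (coatom_at ts j)" "coatom_at ts j \<noteq> coatom_at ts i"
      using is_coatom_iff coatom_at_inj j i by blast+
    then have "\<not> snd (prod_poset ts) y (coatom_at ts j)" using y_slice unfolding coatom_slice_def by blast
    then show "y ! j = ts ! j" using le_coatom_at_iff y j(1) by blast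
  qed
  moreover have "length y = length ts" "y ! i \<in> lower_forests (ts ! i)" using y i prod_poset_mem_iff by auto
  ultimately have "y = ts[i := y ! i]" using i by (intro nth_equalityI) (auto simp: nth_list_update)
  then show "y \<in> {ts[i := x] | x. x \<in> lower_forests (ts ! i)}" using \<open>y ! i \<in> lower_forests (ts ! i)\<close> by blast
next
  fix y assume "y \<in> {ts[i := x] | x. x \<in> lower_forests (ts ! i)}"
  then obtain x where x: "y = ts[i := x]" "x \<in> lower_forests (ts ! i)" by blast
  then have y: "y \<in> fst (prod_poset ts)"
    unfolding prod_poset_mem_iff using self_in_lower_forests i by (simp add: nth_list_update)
  show "y \<in> coatom_slice (prod_poset ts) ts (coatom_at ts i)"
    unfolding coatom_slice_def
  proof (intro CollectI conjI allI impI y)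
    fix B assume B: "is_coatom (prod_poset ts) ts B \<and> B \<noteq> coatom_at ts i"
    then obtain j where j: "j < length ts" "B = coatom_at ts j" using is_coatom_iff by blast
    then have "j \<noteq> i" using B by blast
    then have "y ! j = ts ! j" using x by simp
    then show "\<not> snd (prod_poset ts) y B" using le_coatom_at_iff y j by blast
  qed
qed

lemma poset_iso_coatom_slice_factor:
  assumes i: "i < length ts"
  shows "poset_iso (coatom_slice (prod_poset ts) ts (coatom_at ts i), snd (prod_poset ts)) (prod_poset [ts ! i])"
proof (rule poset_iso_intro[where f="\<lambda>y. [y ! i]" and g="\<lambda>z. ts[i := hd z]"])
  fix y assume "y \<in> fst (coatom_slice (prod_poset ts) ts (coatom_at ts i), snd (prod_poset ts))"
  then obtain x where x: "y = ts[i := x]" "x \<in> lower_forests (ts ! i)" using coatom_slice_eq[OF i] by auto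
  then show "[y ! i] \<in> fst (prod_poset [ts ! i])" "ts[i := hd [y ! i]] = y"
    using i unfolding prod_poset_mem_iff by simp_all
next
  fix z assume "z \<in> fst (prod_poset [ts ! i])"
  then obtain x where x: "z = [x]" "x \<in> lower_forests (ts ! i)"
    unfolding prod_poset_mem_iff by (metis length_0_conv length_Suc_conv less_one nth_Cons_0 One_nat_def)
  then show "ts[i := hd z] \<in> fst (coatom_slice (prod_poset ts) ts (coatom_at ts i), snd (prod_poset ts))"
    "[ts[i := hd z] ! i] = z"
    using coatom_slice_eq[OF i] i by auto
next
  fix y y' assume "y \<in> fst (coatom_slice (prod_poset ts) ts (coatom_at ts i), snd (prod_poset ts))"
    "y' \<in> fst (coatom_slice (prod_poset ts) ts (coatom_at ts i), snd (prod_poset ts))"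
  then obtain x x' where x: "y = ts[i := x]" "x \<in> lower_forests (ts ! i)"
    and x': "y' = ts[i := x']" "x' \<in> lower_forests (ts ! i)"
    using coatom_slice_eq[OF i] by auto
  then have mem: "y \<in> fst (prod_poset ts)" "y' \<in> fst (prod_poset ts)"
    "[x] \<in> fst (prod_poset [ts ! i])" "[x'] \<in> fst (prod_poset [ts ! i])"
    unfolding prod_poset_mem_iff using self_in_lower_forests i by (auto simp: nth_list_update)
  have "(\<forall>j<length ts. y ! j \<subseteq> y' ! j) \<longleftrightarrow> x \<subseteq> x'"
    using x x' i by (auto simp: nth_list_update)
  then show "snd (coatom_slice (prod_poset ts) ts (coatom_at ts i), snd (prod_poset ts)) y y' =
        snd (prod_poset [ts ! i]) [y ! i] [y' ! i]"
    using prod_poset_le_iff[OF mem(1,2)] prod_poset_le_iff[OF mem(3,4)] x x' i by simp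
qed

end

lemma unique_coatom_factorsI: "\<forall>t\<in>set ts. has_unique_coatom t \<Longrightarrow> unique_coatom_factors ts"
  by unfold_locales simp

lemma is_poset_iso_prod_poset_coatom_at:
  assumes "unique_coatom_factors ts" "unique_coatom_factors ss"
    and f: "is_poset_iso f (prod_poset ts) (prod_poset ss)"
  obtains \<sigma> where "bij_betw \<sigma> {..<length ts} {..<length ss}"
    "\<And>i. i < length ts \<Longrightarrow> f (coatom_at ts i) = coatom_at ss (\<sigma> i)"
proof -
  interpret T: unique_coatom_factors ts by fact
  interpret S: unique_coatom_factors ss by fact
  have f_top: "f ts = ss"
    using is_poset_iso_top[OF f] prod_poset_top_mem prod_poset_le_top prod_poset_antisym by blast
  have inj: "\<And>x y. x \<in> fst (prod_poset ts) \<Longrightarrow> y \<in> fst (prod_poset ts) \<Longrightarrow> f x = f y \<Longrightarrow> x = y"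
    and surj: "fst (prod_poset ss) = f ` fst (prod_poset ts)"
    using f unfolding is_poset_iso_def bij_betw_def inj_on_def by blast+
  have coatom_iff: "is_coatom (prod_poset ts) ts B \<longleftrightarrow> is_coatom (prod_poset ss) ss (f B)"
    if "B \<in> fst (prod_poset ts)" for B
    using is_poset_iso_coatom_iff[OF f prod_poset_top_mem that] f_top by simp
  have "\<exists>j<length ss. f (coatom_at ts i) = coatom_at ss j" if i: "i < length ts" for i
    using coatom_iff[OF T.coatom_at_mem[OF i]] T.is_coatom_iff S.is_coatom_iff i by blast
  then obtain \<sigma> where \<sigma>: "\<And>i. i < length ts \<Longrightarrow> \<sigma> i < length ss \<and> f (coatom_at ts i) = coatom_at ss (\<sigma> i)"
    by metis
  have "inj_on \<sigma> {..<length ts}"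
  proof (rule inj_onI)
    fix i i' assume "i \<in> {..<length ts}" "i' \<in> {..<length ts}" "\<sigma> i = \<sigma> i'"
    then show "i = i'" using \<sigma> inj T.coatom_at_mem T.coatom_at_inj by (metis lessThan_iff)
  qed
  moreover have "j \<in> \<sigma> ` {..<length ts}" if j: "j < length ss" for j
  proof -
    obtain B where B: "B \<in> fst (prod_poset ts)" "coatom_at ss j = f B"
      using S.coatom_at_mem[OF j] surj by blast
    then have "is_coatom (prod_poset ts) ts B" using coatom_iff S.is_coatom_iff j by metis
    then obtain i where i: "i < length ts" "B = coatom_at ts i" using T.is_coatom_iff by blast
    then have "\<sigma> i = j" using \<sigma> B j S.coatom_at_inj by metis
    then show ?thesis using i by blast
  qed
  ultimately have "bij_betw \<sigma> {..<length ts} {..<length ss}"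
    unfolding bij_betw_def using \<sigma> by auto
  then show thesis using that \<sigma> by blast
qed

theorem prod_poset_iso_factors:
  assumes "\<forall>t\<in>set ts. has_unique_coatom t" "\<forall>s\<in>set ss. has_unique_coatom s"
    and "poset_iso (prod_poset ts) (prod_poset ss)"
  obtains \<sigma> where "bij_betw \<sigma> {..<length ts} {..<length ss}"
    "\<And>i. i < length ts \<Longrightarrow> poset_iso (prod_poset [ts ! i]) (prod_poset [ss ! \<sigma> i])"
proof -
  interpret T: unique_coatom_factors ts using assms(1) by (rule unique_coatom_factorsI)
  interpret S: unique_coatom_factors ss using assms(2) by (rule unique_coatom_factorsI)
  obtain f where f: "is_poset_iso f (prod_poset ts) (prod_poset ss)"
    using assms(3) poset_iso_iff_ex_is_poset_iso by blast
  have f_top: "f ts = ss"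
    using is_poset_iso_top[OF f] prod_poset_top_mem prod_poset_le_top prod_poset_antisym by blast
  obtain \<sigma> where \<sigma>: "bij_betw \<sigma> {..<length ts} {..<length ss}"
    "\<And>i. i < length ts \<Longrightarrow> f (coatom_at ts i) = coatom_at ss (\<sigma> i)"
    using is_poset_iso_prod_poset_coatom_at[OF T.unique_coatom_factors_axioms S.unique_coatom_factors_axioms f]
    by blast
  have "poset_iso (prod_poset [ts ! i]) (prod_poset [ss ! \<sigma> i])" if i: "i < length ts" for i
  proof -
    have \<sigma>i: "\<sigma> i < length ss" using \<sigma>(1) i by (auto dest: bij_betwE)
    have "poset_iso (prod_poset [ts ! i]) (coatom_slice (prod_poset ts) ts (coatom_at ts i), snd (prod_poset ts))"
      using poset_iso_sym[OF T.poset_iso_coatom_slice_factor[OF i]] .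
    also have "poset_iso \<dots> (coatom_slice (prod_poset ss) ss (coatom_at ss (\<sigma> i)), snd (prod_poset ss))"
      using poset_iso_coatom_slice[OF f prod_poset_top_mem T.coatom_at_mem[OF i]] f_top \<sigma>(2)[OF i] by simp
    also have "poset_iso \<dots> (prod_poset [ss ! \<sigma> i])"
      using S.poset_iso_coatom_slice_factor[OF \<sigma>i] .
    finally show ?thesis .
  qed
  with \<sigma>(1) show thesis using that by blast
qed

section \<open>Cutting a tree at its root\<close>

lemma is_tree_obtain_root:
  assumes "is_tree I t"
  obtains r where "roots I t = {r}"
  using assms unfolding is_tree_def by (meson card_1_singletonE)

locale rooted_tree =
  fixes I :: "nat set" and t :: forest and r :: nat
  assumes tree: "is_tree I t" and roots_eq: "roots I t = {r}"
begin

lemma forest: "is_forest I t"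
  using tree unfolding is_tree_def by blast

lemma parent_unique: "(v, w) \<in> t \<Longrightarrow> (v, w') \<in> t \<Longrightarrow> w = w'"
  using forest unfolding is_forest_def by blast

lemma edge_in: "(v, w) \<in> t \<Longrightarrow> v \<in> I \<and> w \<in> I"
  using forest unfolding is_forest_def by blast

lemma root_no_parent: "(r, w) \<notin> t"
  using roots_eq unfolding roots_def by blast

lemma rtrancl_to_root:
  assumes "v \<in> I"
  shows "(v, r) \<in> t\<^sup>*"
  using wf_converse_forest[OF forest] assms
proof (induction v rule: wf_induct_rule)
  case (less v)
  show ?case
  proof (cases "\<exists>w. (v, w) \<in> t")
    case True
    then obtain w where vw: "(v, w) \<in> t" by blast
    then have "(w, r) \<in> t\<^sup>*" using less.IH edge_in by blast
    then show ?thesis using vw by (meson converse_rtrancl_into_rtrancl)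
  next
    case False
    then have "v \<in> roots I t" using less.prems unfolding roots_def by blast
    then show ?thesis using roots_eq by simp
  qed
qed

lemma rtrancl_from_root: "(r, x) \<in> t\<^sup>* \<Longrightarrow> x = r"
  by (erule converse_rtranclE) (use root_no_parent in auto)

lemma rtrancl_from_child: "(v, r) \<in> t \<Longrightarrow> (v, x) \<in> t\<^sup>* \<Longrightarrow> x = v \<or> x = r"
  by (erule converse_rtranclE) (use parent_unique rtrancl_from_root in blast)+

text \<open>A lower forest containing the only root edge \<open>(c, r)\<close> contains all of \<open>t\<close>, since every
  edge lies below \<open>c\<close>; so \<open>t - {(c, r)}\<close> is the unique coatom.\<close>
lemma has_unique_coatom_if_one_child:
  assumes c: "{v. (v, r) \<in> t} = {c}"
  shows "has_unique_coatom t"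
proof -
  define a where "a = t - {(c, r)}"
  have a_lower: "a \<in> lower_forests t"
    unfolding lower_forests_def child_closed_def a_def using root_no_parent by blast
  have "x \<subseteq> a" if x: "x \<in> lower_forests t" "x \<noteq> t" for x
  proof (rule ccontr)
    assume "\<not> x \<subseteq> a"
    then have cr: "(c, r) \<in> x" using x unfolding a_def lower_forests_def by blast
    have closed: "child_closed x t" using x unfolding lower_forests_def by blast
    have "(u, w) \<in> x" if uw: "(u, w) \<in> t" for u w
    proof -
      have "(w, r) \<in> t\<^sup>*" using rtrancl_to_root edge_in uw by blast
      then show ?thesis using uw
      proof (induction arbitrary: u rule: converse_rtrancl_induct)
        case base
        then have "u = c" using c by blast
        then show ?case using cr by simp
      next
        case (step w w')
        then show ?case using closed unfolding child_closed_def by blast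
      qed
    qed
    then show False using x unfolding lower_forests_def by auto
  qed
  moreover have "a \<noteq> t" using c unfolding a_def by blast
  ultimately show ?thesis unfolding has_unique_coatom_def using a_lower by blast
qed

end

lemma root_valence_one_imp_has_unique_coatom:
  assumes "is_tree I t" "root_valence_one I t"
  shows "has_unique_coatom t"
proof -
  obtain r where r: "roots I t = {r}" "card {v. (v, r) \<in> t} = 1"
    using assms(2) unfolding root_valence_one_def by blast
  interpret rooted_tree I t r using assms(1) r(1) by unfold_locales
  show ?thesis using r(2) has_unique_coatom_if_one_child by (metis card_1_singletonE)
qed

lemma lower_forests_trans: "x \<in> lower_forests y \<Longrightarrow> y \<in> lower_forests t \<Longrightarrow> x \<in> lower_forests t"
  unfolding lower_forests_def child_closed_def by blast

lemma inter_mem_lower_forests: "x \<in> lower_forests t \<Longrightarrow> b \<subseteq> t \<Longrightarrow> x \<inter> b \<in> lower_forests b"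
  unfolding lower_forests_def child_closed_def by blast

lemma Union_mem_lower_forests: "\<forall>x\<in>X. x \<in> lower_forests t \<Longrightarrow> \<Union>X \<in> lower_forests t"
  unfolding lower_forests_def child_closed_def by blast

lemma prod_poset_singleton_memE:
  assumes "z \<in> fst (prod_poset [t])"
  obtains x where "z = [x]" "x \<in> lower_forests t"
  using assms unfolding prod_poset_def by (auto simp: list_all2_Cons2)

lemma poset_iso_prod_poset_partition:
  assumes cover: "\<Union>(set bs) = t"
    and disjoint: "\<And>j k. j < length bs \<Longrightarrow> k < length bs \<Longrightarrow> j \<noteq> k \<Longrightarrow> bs ! j \<inter> bs ! k = {}"
    and lower: "\<And>b. b \<in> set bs \<Longrightarrow> b \<in> lower_forests t"
  shows "poset_iso (prod_poset [t]) (prod_poset bs)"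
proof (rule poset_iso_intro[where f="\<lambda>z. map (\<lambda>b. hd z \<inter> b) bs" and g="\<lambda>ys. [\<Union>(set ys)]"])
  fix z assume "z \<in> fst (prod_poset [t])"
  then obtain x where x: "z = [x]" "x \<in> lower_forests t" by (rule prod_poset_singleton_memE)
  then show "map (\<lambda>b. hd z \<inter> b) bs \<in> fst (prod_poset bs)"
    unfolding prod_poset_mem_iff using inter_mem_lower_forests lower lower_forests_subset by simp
  have "\<Union>(set (map (\<lambda>b. x \<inter> b) bs)) = x" using x(2) cover lower_forests_subset by auto
  then show "[\<Union>(set (map (\<lambda>b. hd z \<inter> b) bs))] = z" using x by simp
next
  fix ys assume "ys \<in> fst (prod_poset bs)"
  then have len: "length ys = length bs" and ysD: "\<And>k. k < length bs \<Longrightarrow> ys ! k \<in> lower_forests (bs ! k)"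
    unfolding prod_poset_mem_iff by auto
  then have "\<forall>y\<in>set ys. y \<in> lower_forests t"
    using lower lower_forests_trans by (metis in_set_conv_nth nth_mem)
  then show "[\<Union>(set ys)] \<in> fst (prod_poset [t])"
    unfolding prod_poset_mem_iff using Union_mem_lower_forests by simp
  have "\<Union>(set ys) \<inter> bs ! k = ys ! k" if k: "k < length bs" for k
  proof
    show "ys ! k \<subseteq> \<Union>(set ys) \<inter> bs ! k" using ysD[OF k] len k lower_forests_subset by force
    show "\<Union>(set ys) \<inter> bs ! k \<subseteq> ys ! k"
    proof
      fix e assume e: "e \<in> \<Union>(set ys) \<inter> bs ! k"
      then obtain j where j: "j < length bs" "e \<in> ys ! j" using len by (auto simp: in_set_conv_nth)
      then have "e \<in> bs ! j" using ysD lower_forests_subset by blast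
      then have "j = k" using disjoint[OF j(1) k] e by blast
      then show "e \<in> ys ! k" using j by simp
    qed
  qed
  then show "map (\<lambda>b. hd [\<Union>(set ys)] \<inter> b) bs = ys" using len by (simp add: list_eq_iff_nth_eq)
next
  fix z z' assume "z \<in> fst (prod_poset [t])" "z' \<in> fst (prod_poset [t])"
  moreover obtain x x' where x: "z = [x]" "x \<in> lower_forests t" and x': "z' = [x']" "x' \<in> lower_forests t"
    using calculation by (metis prod_poset_singleton_memE)
  moreover have "map (\<lambda>b. x \<inter> b) bs \<in> fst (prod_poset bs)" "map (\<lambda>b. x' \<inter> b) bs \<in> fst (prod_poset bs)"
    unfolding prod_poset_mem_iff using inter_mem_lower_forests lower lower_forests_subset x x' by simp_all
  moreover have "x \<subseteq> x' \<longleftrightarrow> (\<forall>k<length bs. x \<inter> bs ! k \<subseteq> x' \<inter> bs ! k)"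
  proof
    assume parts: "\<forall>k<length bs. x \<inter> bs ! k \<subseteq> x' \<inter> bs ! k"
    show "x \<subseteq> x'"
    proof
      fix e assume "e \<in> x"
      moreover obtain k where "k < length bs" "e \<in> bs ! k"
        using \<open>e \<in> x\<close> lower_forests_subset[OF x(2)] cover by (metis UnionE in_set_conv_nth subsetD)
      ultimately show "e \<in> x'" using parts by blast
    qed
  qed blast
  ultimately show "snd (prod_poset [t]) z z' \<longleftrightarrow>
      snd (prod_poset bs) (map (\<lambda>b. hd z \<inter> b) bs) (map (\<lambda>b. hd z' \<inter> b) bs)"
    by (simp add: prod_poset_le_iff)
qed

definition branch :: "forest \<Rightarrow> nat \<Rightarrow> forest" where
  "branch t c = {(u, w) \<in> t. (u, c) \<in> t\<^sup>*}"

context rooted_tree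
begin

lemma branch_mem_lower_forests: "branch t c \<in> lower_forests t"
  unfolding lower_forests_def child_closed_def branch_def
  by (blast intro: converse_rtrancl_into_rtrancl)

lemma branches_disjoint:
  assumes "(c, r) \<in> t" "(c', r) \<in> t" "c \<noteq> c'"
  shows "branch t c \<inter> branch t c' = {}"
proof (rule ccontr)
  assume "branch t c \<inter> branch t c' \<noteq> {}"
  then obtain u w where "(u, w) \<in> branch t c" "(u, w) \<in> branch t c'" by auto
  then have u: "(u, c) \<in> t\<^sup>*" "(u, c') \<in> t\<^sup>*" unfolding branch_def by auto
  have "single_valued t" unfolding single_valued_def using parent_unique by blast
  then have "(c, c') \<in> t\<^sup>* \<or> (c', c) \<in> t\<^sup>*" using u(1,2) by (rule single_valued_confluent)
  moreover have "c \<noteq> r" "c' \<noteq> r" using assms(1,2) root_no_parent by metis+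
  ultimately show False
    using rtrancl_from_child[OF assms(1), of c'] rtrancl_from_child[OF assms(2), of c] assms(3) by blast
qed

lemma edge_in_branch:
  assumes "(u, w) \<in> t"
  obtains c where "(c, r) \<in> t" "(u, w) \<in> branch t c"
proof -
  have "(w, r) \<in> t\<^sup>*" using rtrancl_to_root edge_in assms by blast
  then have "(u, r) \<in> t\<^sup>+" using assms by (meson rtrancl_into_trancl2)
  then obtain c where "(u, c) \<in> t\<^sup>*" "(c, r) \<in> t" using tranclD2 by metis
  then show thesis using that assms unfolding branch_def by blast
qed

lemma roots_branch:
  assumes c: "(c, r) \<in> t"
  shows "roots (Field (branch t c)) (branch t c) = {r}"
proof
  show "{r} \<subseteq> roots (Field (branch t c)) (branch t c)"
    using c root_no_parent unfolding roots_def branch_def by (auto intro: FieldI2)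
  show "roots (Field (branch t c)) (branch t c) \<subseteq> {r}"
  proof
    fix v assume v: "v \<in> roots (Field (branch t c)) (branch t c)"
    then obtain u where u: "(u, v) \<in> t" "(u, c) \<in> t\<^sup>*"
      unfolding roots_def branch_def Field_def by blast
    show "v \<in> {r}"
    proof (rule ccontr)
      assume "v \<notin> {r}"
      then have "(v, r) \<in> t\<^sup>+" using rtrancl_to_root edge_in u(1) by (auto simp: rtrancl_eq_or_trancl)
      then obtain z where "(v, z) \<in> t" using tranclD by metis
      moreover have "(v, c) \<in> t\<^sup>*"
        using u(2)
      proof (cases rule: converse_rtranclE)
        case base
        then show ?thesis using u(1) c parent_unique \<open>v \<notin> {r}\<close> by blast
      next
        case (step z)
        then show ?thesis using u(1) parent_unique by blast
      qed
      ultimately show False using v unfolding roots_def branch_def by blast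
    qed
  qed
qed

lemma branch_valence_one_tree:
  assumes c: "(c, r) \<in> t"
  shows "is_tree (Field (branch t c)) (branch t c) \<and> root_valence_one (Field (branch t c)) (branch t c)"
proof -
  have sub: "branch t c \<subseteq> t" unfolding branch_def by blast
  have "is_forest (Field (branch t c)) (branch t c)"
    unfolding is_forest_def
  proof (intro conjI)
    show "finite (Field (branch t c))"
      using finite_subset[OF sub finite_forest[OF forest]] by (simp add: finite_Field)
    show "branch t c \<subseteq> Field (branch t c) \<times> Field (branch t c)" by (auto intro: FieldI1 FieldI2)
    show "\<forall>v w w'. (v, w) \<in> branch t c \<and> (v, w') \<in> branch t c \<longrightarrow> w = w'"
      using parent_unique sub by blast
    show "\<forall>v. (v, v) \<notin> (branch t c)\<^sup>+"
      using forest trancl_mono[OF _ sub] unfolding is_forest_def by blast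
  qed
  moreover have "{v. (v, r) \<in> branch t c} = {c}"
  proof (intro set_eqI iffI)
    fix v assume "v \<in> {v. (v, r) \<in> branch t c}"
    then have "(v, r) \<in> t" "(v, c) \<in> t\<^sup>*" unfolding branch_def by auto
    then have "c = v \<or> c = r" using rtrancl_from_child by blast
    then show "v \<in> {c}" using c root_no_parent by auto
  qed (use c in \<open>auto simp: branch_def\<close>)
  ultimately show ?thesis
    unfolding is_tree_def root_valence_one_def using roots_branch[OF c] by simp
qed

lemma poset_iso_prod_poset_branches:
  "poset_iso (prod_poset [t]) (prod_poset (map (branch t) (sorted_list_of_set {c. (c, r) \<in> t})))"
proof (rule poset_iso_prod_poset_partition)
  let ?cs = "sorted_list_of_set {c. (c, r) \<in> t}"
  have "{c. (c, r) \<in> t} \<subseteq> fst ` t" by force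
  then have "finite {c. (c, r) \<in> t}" using finite_forest[OF forest] finite_subset by blast
  then have cs: "set ?cs = {c. (c, r) \<in> t}" "distinct ?cs" by simp_all
  show "\<Union>(set (map (branch t) ?cs)) = t"
  proof
    show "\<Union>(set (map (branch t) ?cs)) \<subseteq> t" unfolding branch_def by auto
    show "t \<subseteq> \<Union>(set (map (branch t) ?cs))"
    proof (clarify)
      fix u w assume "(u, w) \<in> t"
      then obtain c where "(c, r) \<in> t" "(u, w) \<in> branch t c" by (rule edge_in_branch)
      then show "(u, w) \<in> \<Union>(set (map (branch t) ?cs))" using cs(1) by auto
    qed
  qed
  show "map (branch t) ?cs ! j \<inter> map (branch t) ?cs ! k = {}"
    if "j < length (map (branch t) ?cs)" "k < length (map (branch t) ?cs)" "j \<noteq> k" for j k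
  proof -
    have "?cs ! j \<noteq> ?cs ! k" "(?cs ! j, r) \<in> t" "(?cs ! k, r) \<in> t"
      using that cs nth_mem by (auto simp: nth_eq_iff_index_eq)
    then show ?thesis using branches_disjoint that by simp
  qed
  show "b \<in> lower_forests t" if "b \<in> set (map (branch t) ?cs)" for b
    using that branch_mem_lower_forests by auto
qed

end

definition valence_one_trees :: "(nat set \<times> forest) set" where
  "valence_one_trees = {(I, t). is_tree I t \<and> root_valence_one I t}"

lemma valence_one_trees_tree_list: "set ps \<subseteq> valence_one_trees \<Longrightarrow> tree_list ps"
  unfolding tree_list_def valence_one_trees_def by auto

lemma (in rooted_tree) valence_one_factorization:
  obtains vs where "set vs \<subseteq> valence_one_trees" "poset_iso (prod_poset [t]) (prod_poset (map snd vs))"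
proof
  let ?cs = "sorted_list_of_set {c. (c, r) \<in> t}"
  let ?vs = "map (\<lambda>c. (Field (branch t c), branch t c)) ?cs"
  have "{c. (c, r) \<in> t} \<subseteq> fst ` t" by force
  then have "finite {c. (c, r) \<in> t}" using finite_forest[OF forest] finite_subset by blast
  then show "set ?vs \<subseteq> valence_one_trees"
    using branch_valence_one_tree unfolding valence_one_trees_def by auto
  show "poset_iso (prod_poset [t]) (prod_poset (map snd ?vs))"
    using poset_iso_prod_poset_branches by (simp add: comp_def)
qed

lemma tree_list_valence_one_factorization:
  assumes "tree_list ts"
  obtains vs where "set vs \<subseteq> valence_one_trees"
    "poset_iso (prod_poset (map snd ts)) (prod_poset (map snd vs))"
  using assms
proof (induction ts arbitrary: thesis)
  case Nil
  then show ?case using poset_iso_refl by (metis empty_subsetI list.set(1) list.simps(8))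
next
  case (Cons p ts)
  then have p: "is_tree (fst p) (snd p)" and "tree_list ts" unfolding tree_list_def by auto
  then obtain vs where vs: "set vs \<subseteq> valence_one_trees"
    "poset_iso (prod_poset (map snd ts)) (prod_poset (map snd vs))" using Cons.IH by blast
  obtain r where "roots (fst p) (snd p) = {r}" using p by (rule is_tree_obtain_root)
  then interpret rooted_tree "fst p" "snd p" r using p by unfold_locales
  obtain ws where ws: "set ws \<subseteq> valence_one_trees"
    "poset_iso (prod_poset [snd p]) (prod_poset (map snd ws))" by (rule valence_one_factorization)
  have "poset_iso (prod_poset ([snd p] @ map snd ts)) (prod_poset (map snd ws @ map snd vs))"
    using poset_iso_prod_poset_append ws(2) vs(2) by blast
  then show ?case using Cons.prems(1)[of "ws @ vs"] ws(1) vs(1) by simp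
qed

definition prod_class :: "forest list \<Rightarrow> pclass" where
  "prod_class ts = cls (prod_poset ts)"

lemma cls_prodI_eq_prod_class: "tree_list ts \<Longrightarrow> cls (prodI ts) = prod_class (map snd ts)"
  unfolding prod_class_def using prodI_iso_prod_poset cls_eq_iff by blast

lemma prod_class_eq_iff: "prod_class fs = prod_class gs \<longleftrightarrow> poset_iso (prod_poset fs) (prod_poset gs)"
  unfolding prod_class_def by (rule cls_eq_iff)

lemma prod_class_append_cong:
  "prod_class fs = prod_class fs' \<Longrightarrow> prod_class gs = prod_class gs' \<Longrightarrow> prod_class (fs @ gs) = prod_class (fs' @ gs')"
  unfolding prod_class_eq_iff by (rule poset_iso_prod_poset_append)

lemma prod_class_append_commute: "prod_class (fs @ gs) = prod_class (gs @ fs)"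
  unfolding prod_class_eq_iff by (rule poset_iso_prod_poset_swap)

lemma prod_class_eq_if_mset_eq:
  assumes "mset (map (\<lambda>f. prod_class [f]) fs) = mset (map (\<lambda>f. prod_class [f]) gs)"
  shows "prod_class fs = prod_class gs"
  using assms
proof (induction fs arbitrary: gs)
  case Nil
  then show ?case by simp
next
  case (Cons f fs)
  have "prod_class [f] \<in># mset (map (\<lambda>f. prod_class [f]) (f # fs))" by simp
  then have "prod_class [f] \<in> set (map (\<lambda>f. prod_class [f]) gs)"
    unfolding Cons.prems by (simp only: set_mset_mset)
  then obtain g where "g \<in> set gs" and fg: "prod_class [g] = prod_class [f]" by auto
  then obtain gs1 gs2 where gs: "gs = gs1 @ g # gs2" by (meson split_list)
  then have "mset (map (\<lambda>f. prod_class [f]) fs) = mset (map (\<lambda>f. prod_class [f]) (gs1 @ gs2))"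
    using Cons.prems fg by simp
  then have IH: "prod_class fs = prod_class (gs1 @ gs2)" by (rule Cons.IH)
  have "prod_class (f # fs) = prod_class ([g] @ gs1 @ gs2)"
    using prod_class_append_cong[OF fg[symmetric] IH] by simp
  also have "\<dots> = prod_class ((gs1 @ [g]) @ gs2)"
    using prod_class_append_cong[OF prod_class_append_commute[of "[g]" gs1] refl, of gs2] by simp
  finally show ?case using gs by simp
qed

lemma mset_map_conv_nth: "mset (map F xs) = image_mset (\<lambda>i. F (xs ! i)) (mset_set {..<length xs})"
proof -
  have "map F xs = map F (map (nth xs) [0..<length xs])" by (simp add: map_nth)
  then have "mset (map F xs) = image_mset (\<lambda>i. F (xs ! i)) (mset [0..<length xs])"
    by (simp only: mset_map map_map comp_def)
  then show ?thesis by (simp only: mset_upt atLeast0LessThan)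
qed

lemma mset_map_eq_if_bij_betw_indices:
  assumes "bij_betw \<sigma> {..<length xs} {..<length ys}" "\<And>i. i < length xs \<Longrightarrow> F (xs ! i) = G (ys ! \<sigma> i)"
  shows "mset (map F xs) = mset (map G ys)"
proof -
  have "mset (map F xs) = image_mset (\<lambda>i. G (ys ! \<sigma> i)) (mset_set {..<length xs})"
    unfolding mset_map_conv_nth using assms(2) by (intro image_mset_cong) simp
  also have "\<dots> = image_mset (\<lambda>j. G (ys ! j)) (image_mset \<sigma> (mset_set {..<length xs}))"
    by (simp only: multiset.map_comp comp_def)
  also have "image_mset \<sigma> (mset_set {..<length xs}) = mset_set {..<length ys}"
    using assms(1) image_mset_mset_set[of \<sigma> "{..<length xs}"] unfolding bij_betw_def by simp
  finally show ?thesis by (simp only: mset_map_conv_nth)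
qed

theorem prod_class_eq_iff_mset_eq:
  assumes "\<forall>f\<in>set fs. has_unique_coatom f" "\<forall>g\<in>set gs. has_unique_coatom g"
  shows "prod_class fs = prod_class gs \<longleftrightarrow>
    mset (map (\<lambda>f. prod_class [f]) fs) = mset (map (\<lambda>f. prod_class [f]) gs)"
proof
  assume "prod_class fs = prod_class gs"
  then obtain \<sigma> where "bij_betw \<sigma> {..<length fs} {..<length gs}"
    "\<And>i. i < length fs \<Longrightarrow> poset_iso (prod_poset [fs ! i]) (prod_poset [gs ! \<sigma> i])"
    using prod_poset_iso_factors[OF assms] prod_class_eq_iff by metis
  then show "mset (map (\<lambda>f. prod_class [f]) fs) = mset (map (\<lambda>f. prod_class [f]) gs)"
    by (intro mset_map_eq_if_bij_betw_indices) (auto simp: prod_class_eq_iff)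
qed (rule prod_class_eq_if_mset_eq)

section \<open>The algebra\<close>

lemma tree_list_append: "tree_list (ts @ ss) \<longleftrightarrow> tree_list ts \<and> tree_list ss"
  unfolding tree_list_def by auto

lemma cls_prod_cls_prodI:
  assumes "tree_list ts" "tree_list ss"
  shows "cls_prod (cls (prodI ts)) (cls (prodI ss)) = cls (prodI (ts @ ss))"
proof -
  have rep: "tree_list (rep (cls (prodI us))) \<and> prod_class (map snd (rep (cls (prodI us)))) = prod_class (map snd us)"
    if "tree_list us" for us
  proof -
    have "\<exists>vs. tree_list vs \<and> cls (prodI us) = cls (prodI vs)" using that by blast
    then have "tree_list (rep (cls (prodI us))) \<and> cls (prodI us) = cls (prodI (rep (cls (prodI us))))"
      unfolding rep_def by (rule someI_ex)
    then show ?thesis using cls_prodI_eq_prod_class that by metis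
  qed
  have "cls_prod (cls (prodI ts)) (cls (prodI ss)) =
      prod_class (map snd (rep (cls (prodI ts))) @ map snd (rep (cls (prodI ss))))"
    unfolding cls_prod_def using cls_prodI_eq_prod_class tree_list_append rep assms by simp
  also have "\<dots> = prod_class (map snd ts @ map snd ss)"
    using prod_class_append_cong rep assms by blast
  also have "\<dots> = cls (prodI (ts @ ss))" using cls_prodI_eq_prod_class tree_list_append assms by simp
  finally show ?thesis .
qed

lemma cls_prod_commute:
  assumes "A \<in> nap_basis" "B \<in> nap_basis"
  shows "cls_prod A B = cls_prod B A"
proof -
  obtain ts ss where ts: "tree_list ts" "A = cls (prodI ts)" and ss: "tree_list ss" "B = cls (prodI ss)"
    using assms unfolding nap_basis_def by blast
  have "cls_prod A B = prod_class (map snd ts @ map snd ss)"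
    using cls_prod_cls_prodI cls_prodI_eq_prod_class tree_list_append ts ss by simp
  also have "\<dots> = prod_class (map snd ss @ map snd ts)" by (rule prod_class_append_commute)
  also have "\<dots> = cls_prod B A"
    using cls_prod_cls_prodI cls_prodI_eq_prod_class tree_list_append ts ss by simp
  finally show ?thesis .
qed

lemma nap_mult_commute:
  assumes "a \<in> HNAP" "b \<in> HNAP"
  shows "nap_mult a b = nap_mult b a"
proof
  fix C
  have basis: "\<And>A. a A \<noteq> 0 \<Longrightarrow> A \<in> nap_basis" "\<And>B. b B \<noteq> 0 \<Longrightarrow> B \<in> nap_basis"
    using assms unfolding HNAP_def by blast+
  have "(\<Sum>(A, B)\<in>{(A, B). a A \<noteq> 0 \<and> b B \<noteq> 0 \<and> cls_prod A B = C}. a A * b B) =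
      (\<Sum>(B, A)\<in>{(B, A). b B \<noteq> 0 \<and> a A \<noteq> 0 \<and> cls_prod B A = C}. b B * a A)"
    by (rule sum.reindex_bij_witness[of _ prod.swap prod.swap])
      (use basis cls_prod_commute in \<open>auto simp: mult.commute\<close>)
  then show "nap_mult a b C = nap_mult b a C" unfolding nap_mult_def by simp
qed

lemma inj_basisF: "inj (basisF :: pclass \<Rightarrow> pclass \<Rightarrow> 'k::field)"
  by (rule injI) (metis basisF_def one_neq_zero)

lemma nap_mult_basisF: "nap_mult (basisF A) (basisF B) = (basisF (cls_prod A B) :: pclass \<Rightarrow> 'k::field)"
proof
  fix C
  have "{(A', B'). (basisF A A' :: 'k) \<noteq> 0 \<and> (basisF B B' :: 'k) \<noteq> 0 \<and> cls_prod A' B' = C}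
        = (if cls_prod A B = C then {(A, B)} else {})"
    unfolding basisF_def by auto
  then show "nap_mult (basisF A) (basisF B) C = (basisF (cls_prod A B) C :: 'k)"
    unfolding nap_mult_def by (simp add: basisF_def)
qed

definition tree_elem :: "nat set \<times> forest \<Rightarrow> pclass \<Rightarrow> 'k::field" where
  "tree_elem p = basisF (cls (prodI [p]))"

lemma foldr_nap_mult_tree_elem:
  "tree_list ps \<Longrightarrow> foldr nap_mult (map tree_elem ps) nap_one = (basisF (cls (prodI ps)) :: pclass \<Rightarrow> 'k::field)"
proof (induction ps)
  case Nil
  then show ?case unfolding nap_one_def by simp
next
  case (Cons p ps)
  then have "tree_list [p]" "tree_list ps" unfolding tree_list_def by auto
  then have "foldr nap_mult (map tree_elem (p # ps)) nap_one =
      nap_mult (basisF (cls (prodI [p]))) (basisF (cls (prodI ps)) :: pclass \<Rightarrow> 'k)"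
    using Cons.IH by (simp add: tree_elem_def[of p])
  also have "\<dots> = basisF (cls (prodI ([p] @ ps)))"
    unfolding nap_mult_basisF using cls_prod_cls_prodI \<open>tree_list [p]\<close> \<open>tree_list ps\<close> by simp
  finally show ?case by simp
qed

lemma nap_gens_eq: "nap_gens = tree_elem ` valence_one_trees"
  unfolding nap_gens_def tree_elem_def valence_one_trees_def by auto

lemma mset_tree_elem_eq_iff:
  assumes "set ps \<subseteq> valence_one_trees" "set qs \<subseteq> valence_one_trees"
  shows "mset (map (tree_elem :: _ \<Rightarrow> pclass \<Rightarrow> 'k::field) ps) = mset (map tree_elem qs) \<longleftrightarrow>
    cls (prodI ps) = cls (prodI qs)"
proof -
  have elem: "map (tree_elem :: _ \<Rightarrow> pclass \<Rightarrow> 'k) us = map basisF (map (\<lambda>f. prod_class [f]) (map snd us))"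
    and unique: "\<forall>f\<in>set (map snd us). has_unique_coatom f"
    if "set us \<subseteq> valence_one_trees" for us
    using that cls_prodI_eq_prod_class[of "[_]"] root_valence_one_imp_has_unique_coatom
    unfolding tree_elem_def valence_one_trees_def tree_list_def by auto
  have "mset (map (tree_elem :: _ \<Rightarrow> pclass \<Rightarrow> 'k) ps) = mset (map tree_elem qs) \<longleftrightarrow>
      mset (map (\<lambda>f. prod_class [f]) (map snd ps)) = mset (map (\<lambda>f. prod_class [f]) (map snd qs))"
    unfolding elem[OF assms(1)] elem[OF assms(2)] mset_map[of basisF]
    using injD[OF multiset.inj_map[OF inj_basisF[where 'k='k]]] by metis
  also have "\<dots> \<longleftrightarrow> prod_class (map snd ps) = prod_class (map snd qs)"
    using prod_class_eq_iff_mset_eq unique assms by presburger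
  also have "\<dots> \<longleftrightarrow> cls (prodI ps) = cls (prodI qs)"
    using cls_prodI_eq_prod_class valence_one_trees_tree_list assms by simp
  finally show ?thesis .
qed

lemma basisF_mem_HNAP: "C \<in> nap_basis \<Longrightarrow> (basisF C :: pclass \<Rightarrow> 'k::field) \<in> HNAP"
  unfolding HNAP_def basisF_def by simp

lemma sum_basisF_eval:
  assumes "finite S" "inj_on \<mu> S" "M \<in> S"
  shows "(\<Sum>N\<in>S. c N * (basisF (\<mu> N) (\<mu> M) :: 'k::field)) = c M"
proof -
  have "(\<Sum>N\<in>S. c N * (basisF (\<mu> N) (\<mu> M) :: 'k)) = (\<Sum>N\<in>S. if N = M then c N else 0)"
    using assms(2,3) by (intro sum.cong) (auto simp: basisF_def inj_on_def)
  then show ?thesis using assms(1,3) by simp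
qed

lemma HNAP_eq_sum_basisF:
  assumes "h \<in> HNAP"
  shows "h = (\<lambda>x. \<Sum>C\<in>{C. h C \<noteq> 0}. h C * basisF C x)"
proof
  fix x
  have "(\<Sum>C\<in>{C. h C \<noteq> 0}. h C * basisF C x) = (\<Sum>C\<in>{C. h C \<noteq> 0}. if C = x then h C else 0)"
    by (intro sum.cong) (auto simp: basisF_def)
  also have "\<dots> = h x" using assms unfolding HNAP_def by simp
  finally show "h x = (\<Sum>C\<in>{C. h C \<noteq> 0}. h C * basisF C x)" by simp
qed

lemma free_comm_alg_on_HNAP_if_monomials_basis:
  fixes G :: "(pclass \<Rightarrow> 'k::field) set"
  assumes comm: "\<And>a b. a \<in> HNAP \<Longrightarrow> b \<in> HNAP \<Longrightarrow> mul a b = mul b a"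
    and mono: "\<And>M. set_mset M \<subseteq> G \<Longrightarrow> monomial_of mul one M = basisF (\<mu> M)"
    and bij: "bij_betw \<mu> {M. set_mset M \<subseteq> G} nap_basis"
  shows "free_comm_alg_on HNAP mul one G"
  unfolding free_comm_alg_on_def
proof (intro conjI allI impI ballI)
  fix a b :: "pclass \<Rightarrow> 'k" assume "a \<in> HNAP" "b \<in> HNAP"
  then show "mul a b = mul b a" by (rule comm)
next
  fix M assume M: "set_mset M \<subseteq> G"
  then have "\<mu> M \<in> nap_basis" using bij by (auto dest: bij_betwE)
  then show "monomial_of mul one M \<in> HNAP" using mono[OF M] basisF_mem_HNAP by simp
next
  fix S and c :: "(pclass \<Rightarrow> 'k) multiset \<Rightarrow> 'k" and M
  assume S: "finite S \<and> S \<subseteq> {M. set_mset M \<subseteq> G} \<and>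
    (\<lambda>x. \<Sum>M\<in>S. c M * monomial_of mul one M x) = (\<lambda>_. 0)" and M: "M \<in> S"
  have fin: "finite S" and sub: "S \<subseteq> {M. set_mset M \<subseteq> G}"
    and zero: "(\<lambda>x. \<Sum>M\<in>S. c M * monomial_of mul one M x) = (\<lambda>_. 0)"
    using S by simp_all
  have inj: "inj_on \<mu> S" using inj_on_subset[OF bij_betw_imp_inj_on[OF bij] sub] .
  have "0 = (\<Sum>N\<in>S. c N * monomial_of mul one N (\<mu> M))" using fun_cong[OF zero, of "\<mu> M"] by simp
  also have "\<dots> = (\<Sum>N\<in>S. c N * basisF (\<mu> N) (\<mu> M))" using sub mono by (intro sum.cong) auto
  also have "\<dots> = c M" by (rule sum_basisF_eval[OF fin inj M])
  finally show "c M = 0" by simp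
next
  fix h :: "pclass \<Rightarrow> 'k" assume h: "h \<in> HNAP"
  let ?S = "{M. set_mset M \<subseteq> G \<and> h (\<mu> M) \<noteq> 0}"
  have supp: "finite {C. h C \<noteq> 0}" "{C. h C \<noteq> 0} \<subseteq> nap_basis" using h unfolding HNAP_def by auto
  have inj: "inj_on \<mu> ?S" by (rule inj_on_subset[OF bij_betw_imp_inj_on[OF bij]]) blast
  have img: "\<mu> ` ?S = {C. h C \<noteq> 0}"
  proof
    show "{C. h C \<noteq> 0} \<subseteq> \<mu> ` ?S"
    proof
      fix C assume C: "C \<in> {C. h C \<noteq> 0}"
      then obtain M where "M \<in> {M. set_mset M \<subseteq> G}" "C = \<mu> M"
        using supp(2) bij_betw_imp_surj_on[OF bij] by blast
      then show "C \<in> \<mu> ` ?S" using C by blast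
    qed
  qed auto
  have "h = (\<lambda>x. \<Sum>C\<in>{C. h C \<noteq> 0}. h C * basisF C x)" using h by (rule HNAP_eq_sum_basisF)
  also have "\<dots> = (\<lambda>x. \<Sum>M\<in>?S. h (\<mu> M) * monomial_of mul one M x)"
    unfolding img[symmetric] sum.reindex[OF inj] by (auto intro!: sum.cong simp: mono)
  finally show "\<exists>S c. finite S \<and> S \<subseteq> {M. set_mset M \<subseteq> G} \<and> h = (\<lambda>x. \<Sum>M\<in>S. c M * monomial_of mul one M x)"
    using finite_imageD[OF _ inj] img supp(1) by (intro exI[of _ ?S] exI[of _ "\<lambda>M. h (\<mu> M)"]) auto
qed

definition tree_of :: "(pclass \<Rightarrow> 'k::field) \<Rightarrow> nat set \<times> forest" where
  "tree_of g = (SOME p. p \<in> valence_one_trees \<and> tree_elem p = g)"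

lemma tree_of: "g \<in> nap_gens \<Longrightarrow> tree_of g \<in> valence_one_trees \<and> tree_elem (tree_of g) = g"
  unfolding nap_gens_eq tree_of_def by (rule someI_ex) blast

text \<open>Built from the list \<open>SOME xs. mset xs = M\<close> that \<open>monomial_of\<close> multiplies out, so that the
  two agree without a permutation argument.\<close>
definition monomial_class :: "(pclass \<Rightarrow> 'k::field) multiset \<Rightarrow> pclass" where
  "monomial_class M = cls (prodI (map tree_of (SOME xs. mset xs = M)))"

lemma monomial_trees:
  assumes "set_mset M \<subseteq> nap_gens"
  shows "set (map tree_of (SOME xs. mset xs = M)) \<subseteq> valence_one_trees"
    and "map tree_elem (map tree_of (SOME xs. mset xs = M)) = (SOME xs. mset xs = M)"
    and "mset (map tree_elem (map tree_of (SOME xs. mset xs = M))) = M"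
proof -
  have mset: "mset (SOME xs. mset xs = M) = M" using ex_mset by (rule someI_ex)
  then have gens: "set (SOME xs. mset xs = M) \<subseteq> nap_gens" using assms by (metis set_mset_mset)
  show "set (map tree_of (SOME xs. mset xs = M)) \<subseteq> valence_one_trees"
  proof
    fix p assume "p \<in> set (map tree_of (SOME xs. mset xs = M))"
    then obtain g where "g \<in> set (SOME xs. mset xs = M)" "p = tree_of g" by auto
    then show "p \<in> valence_one_trees" using gens tree_of by blast
  qed
  show map_tree_elem: "map tree_elem (map tree_of (SOME xs. mset xs = M)) = (SOME xs. mset xs = M)"
    unfolding map_map by (rule map_idI) (use gens tree_of in auto)
  then show "mset (map tree_elem (map tree_of (SOME xs. mset xs = M))) = M" using mset by simp
qed

lemma monomial_of_nap_gens:
  assumes "set_mset M \<subseteq> nap_gens"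
  shows "monomial_of nap_mult nap_one M = (basisF (monomial_class M) :: pclass \<Rightarrow> 'k::field)"
proof -
  have "monomial_of nap_mult nap_one M =
      foldr nap_mult (map tree_elem (map tree_of (SOME xs. mset xs = M))) nap_one"
    unfolding monomial_of_def monomial_trees(2)[OF assms] ..
  also have "\<dots> = basisF (monomial_class M)"
    unfolding monomial_class_def
    using valence_one_trees_tree_list[OF monomial_trees(1)[OF assms]] by (rule foldr_nap_mult_tree_elem)
  finally show ?thesis .
qed

lemma inj_on_monomial_class:
  "inj_on monomial_class {M. set_mset M \<subseteq> (nap_gens :: (pclass \<Rightarrow> 'k::field) set)}"
proof (rule inj_onI)
  fix M M' :: "(pclass \<Rightarrow> 'k) multiset"
  assume "M \<in> {M. set_mset M \<subseteq> nap_gens}" "M' \<in> {M. set_mset M \<subseteq> nap_gens}"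
    and eq: "monomial_class M = monomial_class M'"
  then have M: "set_mset M \<subseteq> nap_gens" and M': "set_mset M' \<subseteq> nap_gens" by auto
  show "M = M'"
    using mset_tree_elem_eq_iff[OF monomial_trees(1)[OF M] monomial_trees(1)[OF M'], where 'k='k]
      eq monomial_trees(3)[OF M] monomial_trees(3)[OF M'] unfolding monomial_class_def by simp
qed

lemma nap_basis_obtain_valence_one_trees:
  assumes "C \<in> nap_basis"
  obtains vs where "set vs \<subseteq> valence_one_trees" "C = cls (prodI vs)"
proof -
  obtain ts where ts: "tree_list ts" "C = cls (prodI ts)" using assms unfolding nap_basis_def by blast
  obtain vs where vs: "set vs \<subseteq> valence_one_trees"
    "poset_iso (prod_poset (map snd ts)) (prod_poset (map snd vs))"
    using ts(1) by (rule tree_list_valence_one_factorization)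
  have "C = cls (prodI vs)"
    using ts vs cls_prodI_eq_prod_class valence_one_trees_tree_list prod_class_eq_iff by metis
  with vs(1) show thesis by (rule that)
qed

lemma bij_betw_monomial_class:
  "bij_betw monomial_class {M. set_mset M \<subseteq> (nap_gens :: (pclass \<Rightarrow> 'k::field) set)} nap_basis"
proof (rule bij_betw_imageI[OF inj_on_monomial_class])
  show "monomial_class ` {M. set_mset M \<subseteq> (nap_gens :: (pclass \<Rightarrow> 'k) set)} = nap_basis"
  proof
    show "monomial_class ` {M. set_mset M \<subseteq> (nap_gens :: (pclass \<Rightarrow> 'k) set)} \<subseteq> nap_basis"
      using monomial_trees(1) valence_one_trees_tree_list
      unfolding monomial_class_def nap_basis_def by blast
    show "nap_basis \<subseteq> monomial_class ` {M. set_mset M \<subseteq> (nap_gens :: (pclass \<Rightarrow> 'k) set)}"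
    proof
      fix C assume "C \<in> nap_basis"
      then obtain vs where vs: "set vs \<subseteq> valence_one_trees" "C = cls (prodI vs)"
        by (rule nap_basis_obtain_valence_one_trees)
      define M where "M = mset (map (tree_elem :: _ \<Rightarrow> pclass \<Rightarrow> 'k) vs)"
      have M: "set_mset M \<subseteq> nap_gens" unfolding M_def nap_gens_eq using vs(1) by auto
      have "monomial_class M = C"
        using mset_tree_elem_eq_iff[OF monomial_trees(1)[OF M] vs(1)] monomial_trees(3)[OF M] vs(2)
        unfolding monomial_class_def M_def by blast
      with M show "C \<in> monomial_class ` {M. set_mset M \<subseteq> (nap_gens :: (pclass \<Rightarrow> 'k) set)}"
        by blast
    qed
  qed
qed

theorem proposition6p8:
  shows "free_comm_alg_on (HNAP :: (pclass \<Rightarrow> 'k::field) set) nap_mult nap_one nap_gens"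
  using nap_mult_commute monomial_of_nap_gens bij_betw_monomial_class
  by (rule free_comm_alg_on_HNAP_if_monomials_basis)

end
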